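(* Let $(\mathcal G,\Theta=[\cdot,\cdot,\cdot]_{\mathcal G})$ be a Lie triple system with $\mathcal G=\mathfrak g_1\oplus\mathfrak g_2$, let $H:\mathfrak g_2\to\mathfrak g_1$ be linear, and suppose both $((\mathcal G,\Theta),\mathfrak g_1,\mathfrak g_2)$ and its twisting $((\mathcal G,\Theta^H),\mathfrak g_1,\mathfrak g_2)$ are twilled Lie triple systems. Then $$[u,v,w]_H:=[u,v,w]_2+[H(u),v,w]_2+[u,H(v),w]_2+[u,v,H(w)]_2+[H(u),H(v),w]_2+[u,H(v),H(w)]_2+[H(u),v,H(w)]_2$$ for $u,v,w\in\mathfrak g_2$ defines a Lie triple system structure on $\mathfrak g_2$, where $[a,b,c]_2$ is the $\mathfrak g_2$-component of $[a,b,c]_{\mathcal G}$.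
   Context: All vector spaces are over a field of characteristic $0$. A Lie triple system is a vector space with a trilinear bracket satisfying $[x,x,y]=0$, $[x,y,z]+[y,z,x]+[z,x,y]=0$ and $[x,y,[z,w,t]]=[[x,y,z],w,t]+[z,[x,y,w],t]+[z,w,[x,y,t]]$. A twilled Lie triple system $((\mathcal G,\Theta),\mathfrak g_1,\mathfrak g_2)$ is a Lie triple system on $\mathcal G=\mathfrak g_1\oplus\mathfrak g_2$ for which $\mathfrak g_1$ and $\mathfrak g_2$ are subalgebras (closed under the bracket). Cochains: $C^p(\mathcal G,\mathcal G)=\mathrm{Hom}(\otimes^{2p+1}\mathcal G,\mathcal G)$, arguments $(\mathfrak X_1,\dots,\mathfrak X_p,x)$, $\mathfrak X_i=x_i\otimes y_i$; for $P\in C^p,Q\in C^q$, $(P\circ Q)(\mathfrak X_1,\dots,\mathfrak X_{p+q},x)=\sum_{k=1}^p(-1)^{(k-1)q}\sum_{\sigma\in\mathbb S(k-1,q)}(-1)^\sigma P(\mathfrak X_{\sigma(1)},\dots,\mathfrak X_{\sigma(k-1)},Q(\mathfrak X_{\sigma(k)},\dots,\mathfrak X_{\sigma(k+q-1)},x_{k+q})\otimes y_{k+q},\mathfrak X_{k+q+1},\dots,x)+\sum_{k=1}^p(-1)^{(k-1)q}\sum_{\sigma\in\mathbb S(k-1,q)}(-1)^\sigma P(\mathfrak X_{\sigma(1)},\dots,\mathfrak X_{\sigma(k-1)},x_{k+q}\otimes Q(\mathfrak X_{\sigma(k)},\dots,\mathfrak X_{\sigma(k+q-1)},y_{k+q}),\mathfrak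 X_{k+q+1},\dots,x)+\sum_{\sigma\in\mathbb S(p,q)}(-1)^\sigma P(\mathfrak X_{\sigma(1)},\dots,\mathfrak X_{\sigma(p)},Q(\mathfrak X_{\sigma(p+1)},\dots,\mathfrak X_{\sigma(p+q)},x))$ and $[P,Q]_{\mathsf{LTS}}=P\circ Q-(-1)^{pq}Q\circ P$. $\hat H(x,u)=(H(u),0)$, $X_{\hat H}(\cdot)=[\cdot,\hat H]_{\mathsf{LTS}}$, and the twisting is $\Theta^H=\sum_{k\ge0}\frac1{k!}X_{\hat H}^k(\Theta)$ (finite sum), again a Lie triple system bracket on $\mathcal G$. *)

theory Defs
  imports Complex_Main "HOL-Library.Product_Plus"
begin

text \<open>The ambient
  space G = g1 (+) g2 is the product type 'a \<times> 'b, with g1 = 'a \<times> {0} and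
  g2 = {0} \<times> 'b.\<close>

definition prod_scale :: "('k \<Rightarrow> 'a \<Rightarrow> 'a) \<Rightarrow> ('k \<Rightarrow> 'b \<Rightarrow> 'b) \<Rightarrow> 'k \<Rightarrow> 'a \<times> 'b \<Rightarrow> 'a \<times> 'b"
  where "prod_scale s1 s2 c p = (s1 c (fst p), s2 c (snd p))"

definition trilinear :: "('k::field \<Rightarrow> 'v::ab_group_add \<Rightarrow> 'v) \<Rightarrow> ('v \<Rightarrow> 'v \<Rightarrow> 'v \<Rightarrow> 'v) \<Rightarrow> bool"
  where "trilinear s T \<longleftrightarrow>
    (\<forall>y z. Vector_Spaces.linear s s (\<lambda>x. T x y z)) \<and>
    (\<forall>x z. Vector_Spaces.linear s s (\<lambda>y. T x y z)) \<and>
    (\<forall>x y. Vector_Spaces.linear s s (\<lambda>z. T x y z))"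

definition lie_triple_system :: "('k::field \<Rightarrow> 'v::ab_group_add \<Rightarrow> 'v) \<Rightarrow> ('v \<Rightarrow> 'v \<Rightarrow> 'v \<Rightarrow> 'v) \<Rightarrow> bool"
  where "lie_triple_system s T \<longleftrightarrow>
    vector_space s \<and> trilinear s T \<and>
    (\<forall>x y. T x x y = 0) \<and>
    (\<forall>x y z. T x y z + T y z x + T z x y = 0) \<and>
    (\<forall>x y z w t. T x y (T z w t) = T (T x y z) w t + T z (T x y w) t + T z w (T x y t))"

definition twilled :: "('k::field \<Rightarrow> 'a::ab_group_add \<Rightarrow> 'a) \<Rightarrow> ('k \<Rightarrow> 'b::ab_group_add \<Rightarrow> 'b)
     \<Rightarrow> ('a \<times> 'b \<Rightarrow> 'a \<times> 'b \<Rightarrow> 'a \<times> 'b \<Rightarrow> 'a \<times> 'b) \<Rightarrow> bool"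
  where "twilled s1 s2 T \<longleftrightarrow>
    lie_triple_system (prod_scale s1 s2) T \<and>
    (\<forall>x y z. snd (T (x, 0) (y, 0) (z, 0)) = 0) \<and>
    (\<forall>u v w. fst (T (0, u) (0, v) (0, w)) = 0)"

definition hatH :: "('b::zero \<Rightarrow> 'a) \<Rightarrow> 'a \<times> 'b \<Rightarrow> 'a \<times> 'b"
  where "hatH H p = (H (snd p), 0)"

text \<open>The composition P o Q of the LTS cochain complex, specialised to
  P \<in> C^1 (arguments (x1 \<otimes> y1, x)) and Q \<in> C^0, and to P \<in> C^0, Q \<in> C^1.\<close>
definition circ_1_0 :: "('g \<Rightarrow> 'g \<Rightarrow> 'g \<Rightarrow> 'g::plus) \<Rightarrow> ('g \<Rightarrow> 'g) \<Rightarrow> 'g \<Rightarrow> 'g \<Rightarrow> 'g \<Rightarrow> 'g"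
  where "circ_1_0 P Q x1 y1 x = P (Q x1) y1 x + P x1 (Q y1) x + P x1 y1 (Q x)"

definition circ_0_1 :: "('g \<Rightarrow> 'g) \<Rightarrow> ('g \<Rightarrow> 'g \<Rightarrow> 'g \<Rightarrow> 'g) \<Rightarrow> 'g \<Rightarrow> 'g \<Rightarrow> 'g \<Rightarrow> 'g"
  where "circ_0_1 Q P x1 y1 x = Q (P x1 y1 x)"

text \<open>[P,Q]_LTS = P o Q - (-1)^(p q) Q o P with p = 1, q = 0.\<close>
definition lts_bracket_1_0 :: "('g \<Rightarrow> 'g \<Rightarrow> 'g \<Rightarrow> 'g::{plus,minus}) \<Rightarrow> ('g \<Rightarrow> 'g) \<Rightarrow> 'g \<Rightarrow> 'g \<Rightarrow> 'g \<Rightarrow> 'g"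
  where "lts_bracket_1_0 P Q x1 y1 x = circ_1_0 P Q x1 y1 x - circ_0_1 Q P x1 y1 x"

definition XH :: "('b::ab_group_add \<Rightarrow> 'a::ab_group_add) \<Rightarrow> ('a \<times> 'b \<Rightarrow> 'a \<times> 'b \<Rightarrow> 'a \<times> 'b \<Rightarrow> 'a \<times> 'b)
     \<Rightarrow> ('a \<times> 'b \<Rightarrow> 'a \<times> 'b \<Rightarrow> 'a \<times> 'b \<Rightarrow> 'a \<times> 'b)"
  where "XH H P = lts_bracket_1_0 P (hatH H)"

text \<open>Twisting Theta^H = sum_{k>=0} 1/k! X^k(Theta); the sum is finite, and we sum up
  to the least N with X^N(Theta) = 0 (all higher powers vanish then too).\<close>
definition twist :: "('k::field_char_0 \<Rightarrow> 'a::ab_group_add \<Rightarrow> 'a) \<Rightarrow> ('k \<Rightarrow> 'b::ab_group_add \<Rightarrow> 'b)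
     \<Rightarrow> ('b \<Rightarrow> 'a) \<Rightarrow> ('a \<times> 'b \<Rightarrow> 'a \<times> 'b \<Rightarrow> 'a \<times> 'b \<Rightarrow> 'a \<times> 'b)
     \<Rightarrow> 'a \<times> 'b \<Rightarrow> 'a \<times> 'b \<Rightarrow> 'a \<times> 'b \<Rightarrow> 'a \<times> 'b"
  where "twist s1 s2 H T a b c =
    (let N = (LEAST n. (XH H ^^ n) T = (\<lambda>_ _ _. 0))
     in \<Sum>k<N. prod_scale s1 s2 (inverse (of_nat (fact k))) ((XH H ^^ k) T a b c))"

definition bracket_H :: "('a::zero \<times> 'b::{zero,plus} \<Rightarrow> 'a \<times> 'b \<Rightarrow> 'a \<times> 'b \<Rightarrow> 'a \<times> 'b) \<Rightarrow> ('b \<Rightarrow> 'a)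
     \<Rightarrow> 'b \<Rightarrow> 'b \<Rightarrow> 'b \<Rightarrow> 'b"
  where "bracket_H T H u v w =
      snd (T (0, u) (0, v) (0, w))
    + snd (T (H u, 0) (0, v) (0, w))
    + snd (T (0, u) (H v, 0) (0, w))
    + snd (T (0, u) (0, v) (H w, 0))
    + snd (T (H u, 0) (H v, 0) (0, w))
    + snd (T (0, u) (H v, 0) (H w, 0))
    + snd (T (H u, 0) (0, v) (H w, 0))"

end

theory Submission imports Defs begin

(* Since hat H maps into g1 and squares to zero, X^k Theta vanishes for k >= 5, and on arguments
   from g2 the g2-components of X^3 Theta and X^4 Theta vanish because g1 is a subalgebra for Theta.
   The remaining g2-component of the twisted bracket is [u,v,w]_H, the factor 1/2! exactly halving
   the doubled terms of X^2 Theta. As g2 is a subalgebra for Theta^H, the bracket [-,-,-]_H is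
   the restriction of the Lie triple system Theta^H to g2. *)

lemma trilinearD:
  assumes "trilinear s T"
  shows "T (x + y) b c = T x b c + T y b c" "T a (x + y) c = T a x c + T a y c"
    "T a b (x + y) = T a b x + T a b y"
    and "T (s r x) b c = s r (T x b c)" "T a (s r x) c = s r (T a x c)"
    "T a b (s r x) = s r (T a b x)"
  using assms unfolding trilinear_def Vector_Spaces.linear_iff by auto

lemma lie_triple_system_restrict_snd:
  fixes T :: "'a::ab_group_add \<times> 'b::ab_group_add \<Rightarrow> 'a \<times> 'b \<Rightarrow> 'a \<times> 'b \<Rightarrow> 'a \<times> 'b"
  assumes lts: "lie_triple_system (prod_scale s1 s2) T" and "vector_space s2"
    and restrict: "\<And>u v w. T (0, u) (0, v) (0, w) = (0, B u v w)"
  shows "lie_triple_system s2 B"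
proof -
  have tri: "trilinear (prod_scale s1 s2) T"
    using lts by (simp add: lie_triple_system_def)
  have B_eq: "B u v w = snd (T (0, u) (0, v) (0, w))" for u v w
    by (simp add: restrict)
  interpret vector_space "prod_scale s1 s2"
    using lts by (simp add: lie_triple_system_def)
  have "s1 r 0 = 0" for r
    using scale_zero_right[of r] by (simp add: prod_scale_def zero_prod_def)
  then have embed_scale: "(0, s2 r x) = prod_scale s1 s2 r (0, x)" for r x
    by (simp add: prod_scale_def)
  have embed_add: "(0::'a, x + y) = (0, x) + (0, y)" for x y
    by simp
  have snd_scale: "snd (prod_scale s1 s2 r p) = s2 r (snd p)" for r p
    by (simp add: prod_scale_def)
  have B_trilinear: "trilinear s2 B"
    unfolding trilinear_def Vector_Spaces.linear_iff B_eq embed_add embed_scale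
    using \<open>vector_space s2\<close> by (simp only: trilinearD[OF tri] snd_scale snd_add simp_thms)
  have T_axioms: "T x x y = 0" "T x y z + T y z x + T z x y = 0"
    "T x y (T z w t) = T (T x y z) w t + T z (T x y w) t + T z w (T x y t)" for x y z w t
    using lts unfolding lie_triple_system_def by blast+
  have B_axioms: "B x x y = 0" "B x y z + B y z x + B z x y = 0"
    "B x y (B z w t) = B (B x y z) w t + B z (B x y w) t + B z w (B x y t)" for x y z w t
    using T_axioms(1)[of "(0, x)" "(0, y)"] T_axioms(2)[of "(0, x)" "(0, y)" "(0, z)"]
      T_axioms(3)[of "(0, x)" "(0, y)" "(0, z)" "(0, w)" "(0, t)"]
    by (simp_all add: restrict zero_prod_def)
  show ?thesis
    using \<open>vector_space s2\<close> B_trilinear B_axioms unfolding lie_triple_system_def by blast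
qed

lemma funpow_XH_zero:
  assumes "H 0 = 0"
  shows "(XH H ^^ m) (\<lambda>_ _ _. 0) = (\<lambda>_ _ _. 0)"
proof -
  have "XH H (\<lambda>_ _ _. 0) = (\<lambda>_ _ _. 0)"
    by (intro ext) (simp add: XH_def lts_bracket_1_0_def circ_1_0_def circ_0_1_def hatH_def assms
        zero_prod_def)
  then show ?thesis
    by (induction m) simp_all
qed

lemma twist_eq_sum:
  assumes "vector_space s1" "vector_space s2" "H 0 = 0"
    and vanish: "(XH H ^^ n) T = (\<lambda>_ _ _. 0)"
  shows "twist s1 s2 H T a b c
    = (\<Sum>k<n. prod_scale s1 s2 (inverse (of_nat (fact k))) ((XH H ^^ k) T a b c))"
proof -
  define N where "N = (LEAST n. (XH H ^^ n) T = (\<lambda>_ _ _. 0))"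
  have "N \<le> n"
    unfolding N_def using vanish by (rule Least_le)
  have "(XH H ^^ N) T = (\<lambda>_ _ _. 0)"
    unfolding N_def using vanish by (rule LeastI)
  then have vanish_after: "(XH H ^^ k) T = (\<lambda>_ _ _. 0)" if "N \<le> k" for k
    using that funpow_XH_zero[of H, OF \<open>H 0 = 0\<close>, of "k - N"]
    by (metis funpow_add le_add_diff_inverse2 o_apply)
  interpret v1: vector_space s1 by fact
  interpret v2: vector_space s2 by fact
  have scale_0: "prod_scale s1 s2 r 0 = 0" for r
    by (simp add: prod_scale_def zero_prod_def)
  show ?thesis
    unfolding twist_def Let_def N_def[symmetric]
    by (rule sum.mono_neutral_left) (use \<open>N \<le> n\<close> vanish_after scale_0 in auto)
qed

lemma scale_half_double:
  fixes s :: "'k::field_char_0 \<Rightarrow> 'v::ab_group_add \<Rightarrow> 'v"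
  assumes "vector_space s"
  shows "s (1 / 2) (x + x) = x"
proof -
  interpret vector_space s by fact
  have "x + x = s 2 x"
    using scale_left_distrib[of 1 1 x] by simp
  then show ?thesis
    by (simp add: scale_scale)
qed

locale triadditive_twisting =
  fixes T :: "'a::ab_group_add \<times> 'b::ab_group_add \<Rightarrow> 'a \<times> 'b \<Rightarrow> 'a \<times> 'b \<Rightarrow> 'a \<times> 'b"
    and H :: "'b \<Rightarrow> 'a"
  assumes add_left: "\<And>x y b c. T (x + y) b c = T x b c + T y b c"
    and add_mid: "\<And>a x y c. T a (x + y) c = T a x c + T a y c"
    and add_right: "\<And>a b x y. T a b (x + y) = T a b x + T a b y"
    and H_add: "\<And>u v. H (u + v) = H u + H v"
begin

lemma H_0 [simp]: "H 0 = 0"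
  using H_add[of 0 0] by simp

lemma T_zero [simp]: "T 0 b c = 0" "T a 0 c = 0" "T a b 0 = 0"
  using add_left[of 0 0] add_mid[of _ 0 0] add_right[of _ _ 0 0] by simp_all

lemma T_zero_pair [simp]: "T (0, 0) b c = 0" "T a (0, 0) c = 0" "T a b (0, 0) = 0"
  by (simp_all flip: zero_prod_def)

lemma hatH_add [simp]: "hatH H (x + y) = hatH H x + hatH H y"
  by (simp add: hatH_def H_add)

lemma hatH_diff [simp]: "hatH H (x - y) = hatH H x - hatH H y"
  by (metis add_diff_cancel diff_add_cancel hatH_add)

lemma hatH_minus [simp]: "hatH H (- x) = - hatH H x"
  by (metis diff_0 hatH_diff diff_self)

lemma hatH_0 [simp]: "hatH H 0 = 0"
  by (simp add: hatH_def zero_prod_def)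

lemma hatH_hatH [simp]: "hatH H (hatH H x) = 0"
  by (simp add: hatH_def zero_prod_def)

lemma hatH_Pair [simp]: "hatH H (x, u) = (H u, 0)"
  by (simp add: hatH_def)

lemma XH_apply:
  "XH H P a b c
    = P (hatH H a) b c + P a (hatH H b) c + P a b (hatH H c) - hatH H (P a b c)"
  by (simp add: XH_def lts_bracket_1_0_def circ_1_0_def circ_0_1_def)

lemma snd_XH_apply:
  "snd (XH H P a b c)
    = snd (P (hatH H a) b c) + snd (P a (hatH H b) c) + snd (P a b (hatH H c))"
  by (simp add: XH_apply hatH_def)

lemma funpow_XH_zero_arg [simp]:
  "(XH H ^^ k) T 0 b c = 0" "(XH H ^^ k) T a 0 c = 0" "(XH H ^^ k) T a b 0 = 0"
  by (induction k arbitrary: a b c) (simp_all add: XH_apply)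

text \<open>Each term of the expansion carries at least five hats, but a term is nonzero only if no
  argument carries two and at most one is applied outside.\<close>
lemma funpow_XH_5: "(XH H ^^ 5) T = (\<lambda>_ _ _. 0)"
  by (intro ext) (simp add: numeral_eq_Suc XH_apply)

lemma snd_funpow_XH_g2:
  fixes u v w :: 'b
  assumes g1_closed: "\<And>x y z. snd (T (x, 0) (y, 0) (z, 0)) = 0"
  defines "S \<equiv> snd (T (H u, 0) (H v, 0) (0, w)) + snd (T (0, u) (H v, 0) (H w, 0))
      + snd (T (H u, 0) (0, v) (H w, 0))"
  shows "snd ((XH H ^^ 1) T (0, u) (0, v) (0, w))
      = snd (T (H u, 0) (0, v) (0, w)) + snd (T (0, u) (H v, 0) (0, w))
        + snd (T (0, u) (0, v) (H w, 0))"
    and "snd ((XH H ^^ 2) T (0, u) (0, v) (0, w)) = S + S"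
    and "snd ((XH H ^^ 3) T (0, u) (0, v) (0, w)) = 0"
    and "snd ((XH H ^^ 4) T (0, u) (0, v) (0, w)) = 0"
  by (simp_all add: S_def snd_XH_apply numeral_eq_Suc g1_closed algebra_simps)

lemma snd_twist_g2:
  assumes "vector_space s1" "vector_space s2"
    and g1_closed: "\<And>x y z. snd (T (x, 0) (y, 0) (z, 0)) = 0"
  shows "snd (twist s1 s2 H T (0, u) (0, v) (0, w)) = bracket_H T H u v w"
proof -
  interpret vector_space s2 by fact
  have sum_5: "(\<Sum>k<5. f k) = f 0 + f 1 + f 2 + f 3 + f 4" for f :: "nat \<Rightarrow> 'b"
    by (simp add: lessThan_nat_numeral add_ac)
  have "snd (twist s1 s2 H T (0, u) (0, v) (0, w))
      = (\<Sum>k<5. s2 (inverse (of_nat (fact k))) (snd ((XH H ^^ k) T (0, u) (0, v) (0, w))))"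
    by (simp add: twist_eq_sum[OF assms(1,2) H_0 funpow_XH_5] snd_sum prod_scale_def)
  also have "\<dots> = bracket_H T H u v w"
    unfolding sum_5 snd_funpow_XH_g2[OF g1_closed]
    by (simp add: scale_half_double[OF assms(2)]) (simp add: bracket_H_def add.assoc)
  finally show ?thesis .
qed

end

theorem proposition4p7:
  fixes s1 :: "'k::field_char_0 \<Rightarrow> 'a::ab_group_add \<Rightarrow> 'a"
    and s2 :: "'k \<Rightarrow> 'b::ab_group_add \<Rightarrow> 'b"
    and T :: "'a \<times> 'b \<Rightarrow> 'a \<times> 'b \<Rightarrow> 'a \<times> 'b \<Rightarrow> 'a \<times> 'b"
    and H :: "'b \<Rightarrow> 'a"
  assumes "vector_space s1" and "vector_space s2"
    and "Vector_Spaces.linear s2 s1 H"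
    and "twilled s1 s2 T"
    and "twilled s1 s2 (twist s1 s2 H T)"
  shows "lie_triple_system s2 (bracket_H T H)"
proof -
  have tri: "trilinear (prod_scale s1 s2) T"
    and g1_closed: "\<And>x y z. snd (T (x, 0) (y, 0) (z, 0)) = 0"
    using assms(4) by (auto simp: twilled_def lie_triple_system_def)
  have lts_twist: "lie_triple_system (prod_scale s1 s2) (twist s1 s2 H T)"
    and g2_closed: "\<And>u v w. fst (twist s1 s2 H T (0, u) (0, v) (0, w)) = 0"
    using assms(5) by (auto simp: twilled_def)
  interpret triadditive_twisting T H
    using trilinearD(1-3)[OF tri] assms(3) by unfold_locales (auto simp: Vector_Spaces.linear_iff)
  have "twist s1 s2 H T (0, u) (0, v) (0, w) = (0, bracket_H T H u v w)" for u v w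
    using g2_closed snd_twist_g2[OF assms(1,2) g1_closed] by (simp add: prod_eq_iff)
  then show ?thesis
    by (rule lie_triple_system_restrict_snd[OF lts_twist assms(2)])
qed

end
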